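(* For every nonempty graph $G$ and all integers $s,t\ge 1$, \[\hat r((s+t)K_2,G)\le \hat r(sK_2,G)+\hat r(tK_2,G).\]
   Context: All graphs are finite and simple; a graph is nonempty if it has at least one edge. $tK_2$ denotes a matching with $t$ edges (disjoint union of $t$ copies of $K_2$). For graphs $F,G,H$, $F\to(G,H)$ means every red--blue coloring of $E(F)$ contains a red copy of $G$ or a blue copy of $H$, and $\hat r(G,H)=\min\{|E(F)|:F\to(G,H)\}$. *)

theory Defs
  imports Main
begin

text \<open>A finite simple graph is represented by its edge set: a finite set of
  2-element subsets of nat. Isolated vertices are irrelevant for size Ramsey numbers.\<close>
definition graph :: "nat set set \<Rightarrow> bool" where
  "graph E \<longleftrightarrow> finite E \<and> (\<forall>e\<in>E. card e = 2)"

definition has_copy :: "nat set set \<Rightarrow> nat set set \<Rightarrow> bool" where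
  "has_copy H G \<longleftrightarrow> (\<exists>f. inj_on f (\<Union>G) \<and> (\<forall>e\<in>G. f ` e \<in> H))"

definition matching :: "nat \<Rightarrow> nat set set" where
  "matching t = {{2*i, 2*i+1} | i. i < t}"

definition arrows :: "nat set set \<Rightarrow> nat set set \<Rightarrow> nat set set \<Rightarrow> bool" where
  "arrows F G H \<longleftrightarrow> (\<forall>R\<subseteq>F. has_copy R G \<or> has_copy (F - R) H)"

definition size_ramsey :: "nat set set \<Rightarrow> nat set set \<Rightarrow> nat" where
  "size_ramsey G H = (LEAST m. \<exists>F. graph F \<and> card F = m \<and> arrows F G H)"

end

theory Submission
  imports Defs
begin

text \<open>Take optimal graphs \<open>F\<^sub>1 \<rightarrow> (sK\<^sub>2, G)\<close> and \<open>F\<^sub>2 \<rightarrow> (tK\<^sub>2, G)\<close> on disjoint vertex sets.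
  A colouring of \<open>F\<^sub>1 \<union> F\<^sub>2\<close> without a blue \<open>G\<close> restricts to colourings of \<open>F\<^sub>1\<close> and \<open>F\<^sub>2\<close>
  without a blue \<open>G\<close>, so it has a red \<open>sK\<^sub>2\<close> in \<open>F\<^sub>1\<close> and a red \<open>tK\<^sub>2\<close> in \<open>F\<^sub>2\<close>; being
  vertex-disjoint, together they form a red \<open>(s+t)K\<^sub>2\<close>. Iterating the same construction from
  \<open>G \<rightarrow> (K\<^sub>2, G)\<close> produces a graph arrowing \<open>(sK\<^sub>2, G)\<close> for every \<open>s\<close>, so the size Ramsey
  numbers involved are attained at all.\<close>

lemma matching_eq_image: "matching n = (\<lambda>i. {2*i, 2*i+1}) ` {..<n}"
  unfolding matching_def by blast

lemma Union_matching: "\<Union>(matching n) = {..<2*n}"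
proof
  show "\<Union>(matching n) \<subseteq> {..<2*n}" unfolding matching_eq_image by auto
  show "{..<2*n} \<subseteq> \<Union>(matching n)"
  proof
    fix x assume "x \<in> {..<2*n}"
    then have "x div 2 < n" by auto
    moreover have "x \<in> {2*(x div 2), 2*(x div 2)+1}" by auto
    ultimately show "x \<in> \<Union>(matching n)" unfolding matching_eq_image by blast
  qed
qed

lemma has_copy_matching_iff:
  "has_copy H (matching n) \<longleftrightarrow>
     (\<exists>f. inj_on f {..<2*n} \<and> (\<forall>i<n. {f (2*i), f (2*i+1)} \<in> H))"
proof -
  have "(\<forall>e\<in>matching n. f ` e \<in> H) \<longleftrightarrow> (\<forall>i<n. {f (2*i), f (2*i+1)} \<in> H)" for f
    unfolding matching_eq_image by auto
  then show ?thesis unfolding has_copy_def Union_matching by simp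
qed

lemma matching_copy_vertices:
  fixes n :: nat
  assumes "\<forall>i<n. {f (2*i), f (2*i+1)} \<in> H"
  shows "f ` {..<2*n} \<subseteq> \<Union>H"
proof
  fix y assume "y \<in> f ` {..<2*n}"
  then obtain k where k: "k < 2*n" "y = f k" by blast
  define i where "i = k div 2"
  have "i < n" and "k \<in> {2*i, 2*i+1}" unfolding i_def using k(1) by auto
  then have "y \<in> {f (2*i), f (2*i+1)}" and "{f (2*i), f (2*i+1)} \<in> H"
    using k(2) assms by auto
  then show "y \<in> \<Union>H" by blast
qed

lemma has_copy_mono: "H \<subseteq> H' \<Longrightarrow> has_copy H G \<Longrightarrow> has_copy H' G"
  unfolding has_copy_def by blast

lemma has_copy_image:
  assumes "has_copy H G" and "inj h"
  shows "has_copy ((`) h ` H) G"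
proof -
  obtain f where f: "inj_on f (\<Union>G)" "\<forall>e\<in>G. f ` e \<in> H"
    using assms(1) unfolding has_copy_def by blast
  have "inj_on (h \<circ> f) (\<Union>G)"
    using comp_inj_on[OF f(1) inj_on_subset[OF assms(2) subset_UNIV]] .
  moreover have "(h \<circ> f) ` e \<in> (`) h ` H" if "e \<in> G" for e
    unfolding image_comp [symmetric] using f(2) that by (intro imageI) blast
  ultimately show ?thesis unfolding has_copy_def by blast
qed

lemma arrows_image:
  assumes "arrows F A B" and "inj h"
  shows "arrows ((`) h ` F) A B"
  unfolding arrows_def
proof (intro allI impI)
  fix R assume "R \<subseteq> (`) h ` F"
  define R\<^sub>0 where "R\<^sub>0 = {e\<in>F. h ` e \<in> R}"
  have red: "(`) h ` R\<^sub>0 \<subseteq> R" and blue: "(`) h ` (F - R\<^sub>0) \<subseteq> (`) h ` F - R"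
    unfolding R\<^sub>0_def by auto
  have "R\<^sub>0 \<subseteq> F" unfolding R\<^sub>0_def by blast
  then have "has_copy R\<^sub>0 A \<or> has_copy (F - R\<^sub>0) B"
    using assms(1) unfolding arrows_def by blast
  then show "has_copy R A \<or> has_copy ((`) h ` F - R) B"
    by (meson has_copy_mono[OF red] has_copy_mono[OF blue] has_copy_image assms(2))
qed

lemma has_copy_matching_add:
  assumes "has_copy H\<^sub>1 (matching s)" and "has_copy H\<^sub>2 (matching t)"
    and disjoint: "\<Union>H\<^sub>1 \<inter> \<Union>H\<^sub>2 = {}"
  shows "has_copy (H\<^sub>1 \<union> H\<^sub>2) (matching (s + t))"
proof -
  obtain f\<^sub>1 where inj1: "inj_on f\<^sub>1 {..<2*s}"
    and edges1: "\<forall>i<s. {f\<^sub>1 (2*i), f\<^sub>1 (2*i+1)} \<in> H\<^sub>1"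
    using assms(1) unfolding has_copy_matching_iff by blast
  obtain f\<^sub>2 where inj2: "inj_on f\<^sub>2 {..<2*t}"
    and edges2: "\<forall>i<t. {f\<^sub>2 (2*i), f\<^sub>2 (2*i+1)} \<in> H\<^sub>2"
    using assms(2) unfolding has_copy_matching_iff by blast
  define f where "f k = (if k < 2*s then f\<^sub>1 k else f\<^sub>2 (k - 2*s))" for k
  have low: "f ` {..<2*s} = f\<^sub>1 ` {..<2*s}"
    unfolding f_def by (rule image_cong) auto
  have shift: "{2*s..<2*(s+t)} = (\<lambda>k. k + 2*s) ` {..<2*t}"
    by (simp add: lessThan_atLeast0 algebra_simps)
  have f_shift: "f \<circ> (\<lambda>k. k + 2*s) = f\<^sub>2"
    unfolding f_def by (simp add: fun_eq_iff)
  have high: "f ` {2*s..<2*(s+t)} = f\<^sub>2 ` {..<2*t}"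
    unfolding shift image_comp f_shift ..
  have "inj_on f {..<2*s}"
    using inj1 by (subst inj_on_cong) (simp_all add: f_def)
  moreover have "inj_on f {2*s..<2*(s+t)}"
    unfolding shift by (simp add: comp_inj_on_iff f_shift inj2)
  moreover have "f ` {..<2*s} \<inter> f ` {2*s..<2*(s+t)} = {}"
    using matching_copy_vertices[OF edges1] matching_copy_vertices[OF edges2] disjoint
    unfolding low high by blast
  moreover have "{..<2*(s+t)} = {..<2*s} \<union> {2*s..<2*(s+t)}"
    and "{..<2*s} - {2*s..<2*(s+t)} = {..<2*s}" and "{2*s..<2*(s+t)} - {..<2*s} = {2*s..<2*(s+t)}"
    by auto
  ultimately have "inj_on f {..<2*(s+t)}"
    by (simp add: inj_on_Un)
  moreover have "\<forall>i<s+t. {f (2*i), f (2*i+1)} \<in> H\<^sub>1 \<union> H\<^sub>2"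
  proof (intro allI impI)
    fix i assume "i < s + t"
    show "{f (2*i), f (2*i+1)} \<in> H\<^sub>1 \<union> H\<^sub>2"
    proof (cases "i < s")
      case True
      then show ?thesis using edges1 unfolding f_def by simp
    next
      case False
      then obtain j where "i = s + j" and "j < t"
        using \<open>i < s + t\<close> by (metis add_less_cancel_left le_Suc_ex not_less)
      then show ?thesis using edges2 unfolding f_def by simp
    qed
  qed
  ultimately show ?thesis unfolding has_copy_matching_iff by blast
qed

lemma arrows_matching_Un:
  assumes "arrows F\<^sub>1 (matching s) G" and "arrows F\<^sub>2 (matching t) G"
    and "\<Union>F\<^sub>1 \<inter> \<Union>F\<^sub>2 = {}"
  shows "arrows (F\<^sub>1 \<union> F\<^sub>2) (matching (s + t)) G"
  unfolding arrows_def
proof (intro allI impI)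
  fix R assume R: "R \<subseteq> F\<^sub>1 \<union> F\<^sub>2"
  show "has_copy R (matching (s + t)) \<or> has_copy (F\<^sub>1 \<union> F\<^sub>2 - R) G"
  proof (cases "has_copy (F\<^sub>1 - R) G \<or> has_copy (F\<^sub>2 - R) G")
    case True
    moreover have "F\<^sub>1 - R \<subseteq> F\<^sub>1 \<union> F\<^sub>2 - R" and "F\<^sub>2 - R \<subseteq> F\<^sub>1 \<union> F\<^sub>2 - R" by blast+
    ultimately show ?thesis by (meson has_copy_mono)
  next
    case False
    have "F\<^sub>1 - R \<inter> F\<^sub>1 = F\<^sub>1 - R" and "F\<^sub>2 - R \<inter> F\<^sub>2 = F\<^sub>2 - R" by blast+
    then have "has_copy (R \<inter> F\<^sub>1) (matching s)" and "has_copy (R \<inter> F\<^sub>2) (matching t)"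
      using assms(1,2) False unfolding arrows_def by (metis inf_le2)+
    moreover have "\<Union>(R \<inter> F\<^sub>1) \<inter> \<Union>(R \<inter> F\<^sub>2) = {}" using assms(3) by blast
    ultimately have "has_copy ((R \<inter> F\<^sub>1) \<union> (R \<inter> F\<^sub>2)) (matching (s + t))"
      by (rule has_copy_matching_add)
    moreover have "(R \<inter> F\<^sub>1) \<union> (R \<inter> F\<^sub>2) = R" using R by blast
    ultimately show ?thesis by simp
  qed
qed

lemma graph_finite_vertices:
  assumes "graph F"
  shows "finite (\<Union>F)"
proof (rule finite_Union)
  show "finite F" using assms unfolding graph_def by blast
  show "finite e" if "e \<in> F" for e
    using assms that unfolding graph_def by (simp add: card_ge_0_finite)
qed

lemma graph_image:
  assumes "graph F" and "inj h"
  shows "graph ((`) h ` F)" and "card ((`) h ` F) = card F"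
proof -
  have "inj ((`) h)" using assms(2) by (simp add: inj_image_eq_iff inj_def)
  then show "card ((`) h ` F) = card F" by (rule card_image[OF inj_on_subset]) simp
  have "card (h ` e) = card e" for e
    using card_image[OF inj_on_subset[OF assms(2) subset_UNIV]] .
  then show "graph ((`) h ` F)" using assms(1) unfolding graph_def by auto
qed

lemma graph_disjoint_copy:
  assumes "graph F\<^sub>1" and "graph F\<^sub>2"
  obtains h where "inj h" and "\<Union>F\<^sub>1 \<inter> \<Union>((`) h ` F\<^sub>2) = {}"
proof
  define N where "N = Suc (Max (\<Union>F\<^sub>1))"
  have "x < N" if "x \<in> \<Union>F\<^sub>1" for x
    using Max_ge[OF graph_finite_vertices[OF assms(1)] that] unfolding N_def by simp
  then show "\<Union>F\<^sub>1 \<inter> \<Union>((`) (\<lambda>x. x + N) ` F\<^sub>2) = {}" by fastforce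
qed (simp add: inj_def)

lemma graph_Un_card:
  assumes "graph F\<^sub>1" and "graph F\<^sub>2" and "\<Union>F\<^sub>1 \<inter> \<Union>F\<^sub>2 = {}"
  shows "graph (F\<^sub>1 \<union> F\<^sub>2)" and "card (F\<^sub>1 \<union> F\<^sub>2) = card F\<^sub>1 + card F\<^sub>2"
proof -
  show "graph (F\<^sub>1 \<union> F\<^sub>2)" using assms(1,2) unfolding graph_def by auto
  have "e \<noteq> {}" if "e \<in> F\<^sub>1" for e using assms(1) that unfolding graph_def by fastforce
  then have "F\<^sub>1 \<inter> F\<^sub>2 = {}" using assms(3) by blast
  then show "card (F\<^sub>1 \<union> F\<^sub>2) = card F\<^sub>1 + card F\<^sub>2"
    using assms(1,2) unfolding graph_def by (simp add: card_Un_disjoint)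
qed

lemma arrows_matching_add:
  assumes "graph F\<^sub>1" "arrows F\<^sub>1 (matching s) G" and "graph F\<^sub>2" "arrows F\<^sub>2 (matching t) G"
  obtains F where "graph F" "card F = card F\<^sub>1 + card F\<^sub>2" "arrows F (matching (s + t)) G"
proof -
  obtain h where h: "inj h" "\<Union>F\<^sub>1 \<inter> \<Union>((`) h ` F\<^sub>2) = {}"
    using graph_disjoint_copy[OF assms(1,3)] .
  show ?thesis
  proof
    show "graph (F\<^sub>1 \<union> (`) h ` F\<^sub>2)" and "card (F\<^sub>1 \<union> (`) h ` F\<^sub>2) = card F\<^sub>1 + card F\<^sub>2"
      using graph_Un_card[OF assms(1) graph_image(1)[OF assms(3) h(1)] h(2)]
        graph_image(2)[OF assms(3) h(1)] by simp_all
    show "arrows (F\<^sub>1 \<union> (`) h ` F\<^sub>2) (matching (s + t)) G"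
      using arrows_matching_Un[OF assms(2) arrows_image[OF assms(4) h(1)] h(2)] .
  qed
qed

lemma arrows_matching_one:
  assumes "graph G"
  shows "arrows G (matching 1) G"
  unfolding arrows_def
proof (intro allI impI)
  fix R assume R: "R \<subseteq> G"
  show "has_copy R (matching 1) \<or> has_copy (G - R) G"
  proof (cases "R = {}")
    case True
    then show ?thesis unfolding has_copy_def by (auto intro!: exI[of _ id])
  next
    case False
    then obtain a b where ab: "{a, b} \<in> R" "a \<noteq> b"
      using R assms unfolding graph_def by (metis card_2_iff ex_in_conv subsetD)
    define f where "f k = (if k = 0 then a else b)" for k :: nat
    have "inj_on f {..<2*1}" and "\<forall>i<1. {f (2*i), f (2*i+1)} \<in> R"
      using ab unfolding f_def inj_on_def by auto
    then show ?thesis unfolding has_copy_matching_iff by blast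
  qed
qed

lemma arrows_matching_exists:
  assumes "graph G"
  shows "\<exists>F. graph F \<and> arrows F (matching s) G"
proof (induction s)
  case 0
  have "graph {}" and "arrows {} (matching 0) G"
    unfolding graph_def arrows_def has_copy_def matching_def by auto
  then show ?case by blast
next
  case (Suc s)
  then obtain F where "graph F" "arrows F (matching s) G" by blast
  from arrows_matching_add[OF this assms arrows_matching_one[OF assms]]
  show ?case by (metis Suc_eq_plus1)
qed

lemma size_ramsey_le:
  "graph F \<Longrightarrow> arrows F A B \<Longrightarrow> size_ramsey A B \<le> card F"
  unfolding size_ramsey_def by (blast intro: Least_le)

lemma size_ramsey_attained:
  assumes "\<exists>F. graph F \<and> arrows F A B"
  obtains F where "graph F" "card F = size_ramsey A B" "arrows F A B"
proof -
  from assms have "\<exists>m F. graph F \<and> card F = m \<and> arrows F A B" by blast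
  from LeastI_ex[OF this] show ?thesis using that unfolding size_ramsey_def by blast
qed

theorem proposition2p2:
  fixes G :: "nat set set" and s t :: nat
  assumes "graph G" and "G \<noteq> {}" and "s \<ge> 1" and "t \<ge> 1"
  shows "size_ramsey (matching (s + t)) G
           \<le> size_ramsey (matching s) G + size_ramsey (matching t) G"
proof -
  obtain F\<^sub>1 where F\<^sub>1: "graph F\<^sub>1" "card F\<^sub>1 = size_ramsey (matching s) G" "arrows F\<^sub>1 (matching s) G"
    using size_ramsey_attained arrows_matching_exists[OF assms(1)] by metis
  obtain F\<^sub>2 where F\<^sub>2: "graph F\<^sub>2" "card F\<^sub>2 = size_ramsey (matching t) G" "arrows F\<^sub>2 (matching t) G"
    using size_ramsey_attained arrows_matching_exists[OF assms(1)] by metis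
  obtain F where "graph F" "card F = card F\<^sub>1 + card F\<^sub>2" "arrows F (matching (s + t)) G"
    using arrows_matching_add[OF F\<^sub>1(1,3) F\<^sub>2(1,3)] .
  then show ?thesis using size_ramsey_le F\<^sub>1(2) F\<^sub>2(2) by metis
qed

end
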